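(* Let $X=\{x_1,\dots,x_n\}\subset\mathbb{R}^m$ be a dataset, let $S=\{S_1,\dots,S_k\}$ be a partition of $X$ into clusters with centroids $z_1,\dots,z_k\in\mathbb{R}^m$, and let $p>1$. Suppose the features of $X$ consist of at least one relevant feature and at least one noise feature, and that each noise feature is drawn independently from a common distribution. Then, for a cluster $S_l$ and exponent $p>1$, at least one feature $v$ has weight strictly higher than $\frac{1}{m}$, i.e. $w_{lv}^{(p)}>\frac{1}{m}$.
   Context: For a cluster $S_l$ with centroid $z_l$, a feature $v$ and an exponent $p>1$, the within-cluster dispersion is $D_{lv}^{(p)}=\sum_{x_i\in S_l}|x_{iv}-z_{lv}|^p$ (assumed positive), and the Minkowski weighted $k$-means feature weight is \[ w_{lv}^{(p)}=\frac{1}{\sum_{u=1}^m\left(\frac{D_{lv}^{(p)}}{D_{lu}^{(p)}}\right)^{\frac{1}{p-1}}}, \] so that $\sum_{v=1}^m w_{lv}^{(p)}=1$ for each $l$. The features are partitioned into a set $R$ of relevant features and a set of noise features, where a feature $v$ is a noise feature if for each cluster $S_l$ and each $p>1$, $\frac{1}{|R|}\sum_{u\in R}(D_{lv}^{(p)}/D_{lu}^{(p)})^{1/(p-1)}>1$. *)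

theory Defs
  imports Complex_Main
begin

text \<open>Data: x i v is feature v of point i (points 0..<n, features 0..<m).
  Clusters: S l (l < k) is a set of point indices; z l v is feature v of centroid l.\<close>

definition dispersion ::
  "(nat \<Rightarrow> nat \<Rightarrow> real) \<Rightarrow> (nat \<Rightarrow> nat set) \<Rightarrow> (nat \<Rightarrow> nat \<Rightarrow> real)
     \<Rightarrow> nat \<Rightarrow> nat \<Rightarrow> real \<Rightarrow> real" where
  "dispersion x S z l v p = (\<Sum>i\<in>S l. \<bar>x i v - z l v\<bar> powr p)"

definition mwk_weight ::
  "nat \<Rightarrow> (nat \<Rightarrow> nat \<Rightarrow> real) \<Rightarrow> (nat \<Rightarrow> nat set) \<Rightarrow> (nat \<Rightarrow> nat \<Rightarrow> real)
     \<Rightarrow> nat \<Rightarrow> nat \<Rightarrow> real \<Rightarrow> real" where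
  "mwk_weight m x S z l v p =
     1 / (\<Sum>u<m. (dispersion x S z l v p / dispersion x S z l u p) powr (1 / (p - 1)))"

definition is_partition :: "nat \<Rightarrow> nat \<Rightarrow> (nat \<Rightarrow> nat set) \<Rightarrow> bool" where
  "is_partition n k S \<longleftrightarrow>
     (\<forall>l<k. S l \<noteq> {}) \<and>
     (\<forall>l<k. \<forall>l'<k. l \<noteq> l' \<longrightarrow> S l \<inter> S l' = {}) \<and>
     (\<Union>l<k. S l) = {..<n}"

definition is_noise_feature ::
  "nat \<Rightarrow> (nat \<Rightarrow> nat \<Rightarrow> real) \<Rightarrow> (nat \<Rightarrow> nat set) \<Rightarrow> (nat \<Rightarrow> nat \<Rightarrow> real)
     \<Rightarrow> nat set \<Rightarrow> nat \<Rightarrow> bool" where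
  "is_noise_feature k x S z R v \<longleftrightarrow>
     (\<forall>l<k. \<forall>p::real. p > 1 \<longrightarrow>
        (1 / real (card R)) * (\<Sum>u\<in>R. (dispersion x S z l v p / dispersion x S z l u p) powr (1 / (p - 1))) > 1)"

end

theory Submission
  imports Defs
begin

text \<open>The weight of a feature u is 1 / (\<Sum>w. (D u / D w) powr a) with a = 1/(p-1) > 0.
  For the feature u of least dispersion every summand is at most 1, and it is strictly below 1
  at any feature of larger dispersion, so its weight exceeds 1/m unless all dispersions agree.
  They cannot all agree: a noise feature v has mean ratio (D v / D u) powr a over the relevant
  features u above 1, so D v exceeds the dispersion of some relevant feature.\<close>

lemma exists_less_if_mean_powr_ratio_gt_one:
  fixes D :: "'a \<Rightarrow> real"
  assumes "finite R" and "\<forall>u\<in>R. 0 < D u" and "0 < D v" and "0 \<le> a"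
    and "1 < (1 / real (card R)) * (\<Sum>u\<in>R. (D v / D u) powr a)"
  shows "\<exists>u\<in>R. D u < D v"
proof (rule ccontr)
  assume "\<not> (\<exists>u\<in>R. D u < D v)"
  then have "(D v / D u) powr a \<le> 1" if "u \<in> R" for u
    using that assms(2,3,4) by (intro powr_le1) (auto simp: not_less)
  then have "(\<Sum>u\<in>R. (D v / D u) powr a) \<le> real (card R)"
    using sum_mono[of R "\<lambda>u. (D v / D u) powr a" "\<lambda>_. 1"] by simp
  then have "(1 / real (card R)) * (\<Sum>u\<in>R. (D v / D u) powr a) \<le> 1"
    by (cases "card R = 0") (simp_all add: divide_le_eq_1)
  with assms(5) show False by simp
qed

lemma inverse_card_less_inverse_sum_powr_ratio_min:
  fixes D :: "'a \<Rightarrow> real"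
  assumes U: "finite U" and pos: "\<forall>w\<in>U. 0 < D w"
    and u: "u \<in> U" and u_min: "\<forall>w\<in>U. D u \<le> D w"
    and v: "v \<in> U" and "D u < D v" and a: "0 < a"
  shows "1 / real (card U) < 1 / (\<Sum>w\<in>U. (D u / D w) powr a)"
proof -
  have "(D u / D w) powr a \<le> 1" if "w \<in> U" for w
    using that pos u u_min a by (intro powr_le1) (auto simp: abs_of_pos)
  moreover have "(D u / D v) powr a < 1"
    using \<open>D u < D v\<close> pos u v a by (subst powr01_less_one) auto
  ultimately have "(\<Sum>w\<in>U. (D u / D w) powr a) < (\<Sum>w\<in>U. 1)"
    using U v by (intro sum_strict_mono_ex1) auto
  moreover have "1 \<le> (\<Sum>w\<in>U. (D u / D w) powr a)"
  proof -
    have "(D u / D u) powr a = 1" using pos u by (simp add: less_imp_neq[symmetric])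
    moreover have "(D u / D u) powr a \<le> (\<Sum>w\<in>U. (D u / D w) powr a)"
      using U u by (intro member_le_sum) auto
    ultimately show ?thesis by simp
  qed
  ultimately show ?thesis by (simp add: frac_less2)
qed

theorem mainTheorem2:
  fixes n m k :: nat
    and x :: "nat \<Rightarrow> nat \<Rightarrow> real"
    and S :: "nat \<Rightarrow> nat set"
    and z :: "nat \<Rightarrow> nat \<Rightarrow> real"
    and R :: "nat set"
    and l :: nat and p :: real
  assumes partition: "is_partition n k S"
    and disp_pos: "\<forall>l'<k. \<forall>v<m. \<forall>q::real. q > 1 \<longrightarrow> dispersion x S z l' v q > 0"
    and R_sub: "R \<subseteq> {..<m}"
    and R_ne: "R \<noteq> {}"
    and noise_ex: "{..<m} - R \<noteq> {}"
    and noise: "\<forall>v\<in>{..<m} - R. is_noise_feature k x S z R v"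
    and l: "l < k"
    and p: "p > 1"
  shows "\<exists>v<m. mwk_weight m x S z l v p > 1 / real m"
proof -
  define D where "D u = dispersion x S z l u p" for u
  define a where "a = 1 / (p - 1)"
  have a: "0 < a" using p by (simp add: a_def)
  have D_pos: "\<forall>u\<in>{..<m}. 0 < D u" using disp_pos l p by (simp add: D_def)
  obtain v where v: "v \<in> {..<m} - R" using noise_ex by blast
  have "1 < (1 / real (card R)) * (\<Sum>u\<in>R. (D v / D u) powr a)"
    using noise v l p unfolding is_noise_feature_def D_def a_def by blast
  then obtain u where u: "u \<in> R" "D u < D v"
    using exists_less_if_mean_powr_ratio_gt_one[of R D v a] R_sub D_pos v a
    by (auto intro: finite_subset)
  define u0 where "u0 = arg_min_on D {..<m}"
  have U_ne: "{..<m} \<noteq> {}" using v by blast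
  have u0: "u0 \<in> {..<m}" "\<forall>w\<in>{..<m}. D u0 \<le> D w"
    using arg_min_if_finite(1)[of "{..<m}" D] arg_min_least[of "{..<m}" _ D] U_ne
    by (auto simp: u0_def)
  have "D u0 \<le> D u" using u0(2) u(1) R_sub by blast
  with u(2) have "D u0 < D v" by linarith
  then have "1 / real m < 1 / (\<Sum>w<m. (D u0 / D w) powr a)"
    using inverse_card_less_inverse_sum_powr_ratio_min[of "{..<m}" D u0 v a] D_pos u0 v a
    by simp
  then show ?thesis using u0(1) unfolding mwk_weight_def D_def a_def by auto
qed

end
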